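(* Let $\boldsymbol\lambda\in U$, where $U\subset\mathbb{R}^p$ is an open set on which $\widetilde{\mathbf{X}}\mathbf{D}_{\boldsymbol\lambda'}\widetilde{\mathbf{X}}^\top+\mathbf{I}_n$ is invertible for all $\boldsymbol\lambda'\in U$ and on which, for every $i\in\{1,\dots,n\}$, the set of active constraints of row $i$ of $\widehat{\mathbf{Q}}(\boldsymbol\lambda')$ does not depend on $\boldsymbol\lambda'$. Then $f$ is twice differentiable at $\boldsymbol\lambda$, with gradient $$\nabla f(\boldsymbol\lambda)=\mathrm{diag}(\mathbf{N}),\qquad \mathbf{N}:=\widetilde{\mathbf{X}}^\top\mathbf{G}\Big\{\sum_{i=1}^n\mathbf{e}_i\mathbf{e}_i^\top(\widehat{\mathbf{Y}}-\mathbf{Y})(\mathbf{I}_m-\mathbf{P}_{\mathbf{A}_{0,i}})\Big\}\mathbf{Y}^\top\mathbf{G}\widetilde{\mathbf{X}},$$ (where $\mathrm{diag}(\mathbf N)$ is the vector of diagonal entries of $\mathbf N$) and Hessian $$\nabla^2 f(\boldsymbol\lambda)=(\widetilde{\mathbf{X}}^\top\mathbf{G}\mathbf{Y}\mathbf{Y}^\top\mathbf{G}\widetilde{\mathbf{X}})\circ(\widetilde{\mathbf{X}}^\top\mathbf{G}^2\widetilde{\mathbf{X}})-(\widetilde{\mathbf{X}}^\top\mathbf{G}\widetilde{\mathbf{X}})\circ(\mathbf{N}+\mathbf{N}^\top)-\sum_{i=1}^n(\widetilde{\mathbf{X}}^\top\mathbf{G}\mathbf{Y}\mathbf{P}_{\mathbf{A}_{0,i}}\mathbf{Y}^\top\mathbf{G}\widetilde{\mathbf{X}})\circ(\widetilde{\mathbf{X}}^\top\mathbf{G}\mathbf{e}_i\mathbf{e}_i^\top\mathbf{G}\widetilde{\mathbf{X}}),$$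 where $\mathbf G=\mathbf G(\boldsymbol\lambda)$, $\widehat{\mathbf Y}=\widehat{\mathbf Y}(\boldsymbol\lambda)$ and the $\mathbf{A}_{0,i}$ are those of $\widehat{\mathbf{Q}}(\boldsymbol\lambda)$.
   Context: Let $\mathbf{X}\in\mathbb{R}^{n\times p}$ be column-centered, $\widetilde{\mathbf{X}}=\mathbf{X}/\sqrt n$, and $\mathbf{Y}\in\mathbb{R}^{n\times m}$. For $\boldsymbol\lambda\in\mathbb{R}^p$, $\mathbf{D}_{\boldsymbol\lambda}$ is the diagonal matrix with diagonal $\boldsymbol\lambda$, $\mathbf{G}(\boldsymbol\lambda)=(\widetilde{\mathbf{X}}\mathbf{D}_{\boldsymbol\lambda}\widetilde{\mathbf{X}}^\top+\mathbf{I}_n)^{-1}$, and $\widehat{\mathbf{Y}}(\boldsymbol\lambda)=n^{-1}\mathbf{1}_{n\times n}\mathbf{Y}+\mathbf{Y}-\mathbf{G}(\boldsymbol\lambda)\mathbf{Y}$. The matrix $\mathbf{A}\in\mathbb{R}^{m\times(m+1)}$ has entries $A_{j,j}=1$, $A_{j,j+1}=-1$ ($j=1,\dots,m$), others $0$; $\mathbf{B}\in\mathbb{R}^{n\times(m+1)}$ has every row equal to $(b_L,0,\dots,0,-b_U)$ with $b_L<b_U$ finite. Define $\widehat{\mathbf{Q}}(\boldsymbol\lambda)=\arg\min_{\mathbf{Q}\in\mathbb{R}^{n\times m}}\frac12\|\mathbf{Q}-\widehat{\mathbf{Y}}(\boldsymbol\lambda)\|_F^2$ subject to $\mathbf{B}-\mathbf{Q}\mathbf{A}\le\mathbf{0}$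 (entrywise), and $f(\boldsymbol\lambda)=\frac12\|\widehat{\mathbf{Q}}(\boldsymbol\lambda)-\mathbf{Y}\|_F^2$. For row $i$, constraint $c\in\{1,\dots,m+1\}$ is active if $(\mathbf{B}-\widehat{\mathbf{Q}}\mathbf{A})_{i,c}=0$; $\mathbf{A}_{0,i}$ is the submatrix of columns of $\mathbf{A}$ indexed by the active constraints of row $i$, and $\mathbf{P}_{\mathbf{A}_{0,i}}$ is the orthogonal projector onto its column space ($\mathbf{P}_{\mathbf{A}_{0,i}}=\mathbf{0}$ if no constraint is active). $\mathbf{e}_i$ is the $i$-th standard basis vector of $\mathbb{R}^n$, and $\circ$ is the entrywise (Hadamard) product. *)

theory Defs
  imports "HOL-Analysis.Analysis"
begin

text \<open>Dimensions: rows n = CARD('n), predictors p = CARD('p), quantile levels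
 m = CARD('m). The quantile index type 'm carries a linear order, identifying it
 with {1..m}. The m+1 constraints are indexed by 'm option:
 None is the lower-bound constraint (c = 1), Some j is the constraint c = pos(j)+1,
 i.e. Q(i,j) <= Q(i,succ j), or Q(i,j) <= b_U when j is the largest index.\<close>

definition is_succ :: "'m::linorder \<Rightarrow> 'm \<Rightarrow> bool" where
  "is_succ j k \<longleftrightarrow> j < k \<and> (\<forall>l. j < l \<longrightarrow> k \<le> l)"

definition Amat :: "real^('m option)^('m::{finite,linorder})" where
  "Amat = (\<chi> k c. case c of
       None \<Rightarrow> (if (\<forall>l. k \<le> l) then 1 else 0)
     | Some j \<Rightarrow> (if k = j then -1 else if is_succ j k then 1 else 0))"

definition Bmat :: "real \<Rightarrow> real \<Rightarrow> real^('m::{finite,linorder} option)^'n" where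
  "Bmat bL bU = (\<chi> i c. case c of
       None \<Rightarrow> bL
     | Some j \<Rightarrow> (if (\<forall>l. l \<le> j) then - bU else 0))"

definition Xtil :: "real^'p^'n \<Rightarrow> real^'p^'n" where
  "Xtil X = (1 / sqrt (real CARD('n))) *\<^sub>R X"

definition Dlam :: "real^'p \<Rightarrow> real^'p^'p" where
  "Dlam lam = (\<chi> i j. if i = j then lam $ i else 0)"

definition Gmat :: "real^'p^'n \<Rightarrow> real^'p \<Rightarrow> real^'n^'n" where
  "Gmat X lam = matrix_inv (Xtil X ** Dlam lam ** transpose (Xtil X) + mat 1)"

definition ones_mat :: "real^'n^'n" where
  "ones_mat = (\<chi> i j. 1)"

definition Yhat :: "real^'p^'n \<Rightarrow> real^'m^'n \<Rightarrow> real^'p \<Rightarrow> real^'m^'n" where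
  "Yhat X Y lam = (1 / real CARD('n)) *\<^sub>R (ones_mat ** Y) + Y - Gmat X lam ** Y"

definition feasible :: "real \<Rightarrow> real \<Rightarrow> real^('m::{finite,linorder})^'n \<Rightarrow> bool" where
  "feasible bL bU Q \<longleftrightarrow> (\<forall>i c. (Bmat bL bU - Q ** Amat) $ i $ c \<le> 0)"

definition Qhat :: "real^'p^'n \<Rightarrow> real^('m::{finite,linorder})^'n \<Rightarrow> real \<Rightarrow> real \<Rightarrow> real^'p
    \<Rightarrow> real^('m::{finite,linorder})^'n" where
  "Qhat X Y bL bU lam = (THE Q. is_arg_min (\<lambda>Q. (1/2) * (norm (Q - Yhat X Y lam))\<^sup>2)
                               (feasible bL bU) Q)"

text \<open>The norm on real^'m^'n is the Frobenius norm.\<close>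
definition fobj :: "real^'p^'n \<Rightarrow> real^('m::{finite,linorder})^'n \<Rightarrow> real \<Rightarrow> real \<Rightarrow> real^'p
    \<Rightarrow> real" where
  "fobj X Y bL bU lam = (1/2) * (norm (Qhat X Y bL bU lam - Y))\<^sup>2"

definition active :: "real^'p^'n \<Rightarrow> real^('m::{finite,linorder})^'n \<Rightarrow> real \<Rightarrow> real \<Rightarrow> real^'p
    \<Rightarrow> 'n \<Rightarrow> ('m::{finite,linorder}) option set" where
  "active X Y bL bU lam i = {c. (Bmat bL bU - Qhat X Y bL bU lam ** Amat) $ i $ c = 0}"

definition orth_proj :: "'a::euclidean_space set \<Rightarrow> 'a \<Rightarrow> 'a" where
  "orth_proj S x = (THE y. y \<in> span S \<and> (\<forall>z\<in>span S. inner (x - y) z = 0))"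

definition Pact :: "real^'p^'n \<Rightarrow> real^('m::{finite,linorder})^'n \<Rightarrow> real \<Rightarrow> real \<Rightarrow> real^'p
    \<Rightarrow> 'n \<Rightarrow> real^('m::{finite,linorder})^('m::{finite,linorder})" where
  "Pact X Y bL bU lam i =
     matrix (orth_proj ((\<lambda>c. column c Amat) ` active X Y bL bU lam i))"

definition outer :: "real^'a \<Rightarrow> real^'b \<Rightarrow> real^'b^'a" where
  "outer u v = (\<chi> a b. u $ a * v $ b)"

definition hadamard :: "real^'b^'a \<Rightarrow> real^'b^'a \<Rightarrow> real^'b^'a" where
  "hadamard M K = (\<chi> a b. M $ a $ b * K $ a $ b)"

definition diagv :: "real^'a^'a \<Rightarrow> real^'a" where
  "diagv M = (\<chi> k. M $ k $ k)"

definition Nmat :: "real^'p^'n \<Rightarrow> real^('m::{finite,linorder})^'n \<Rightarrow> real \<Rightarrow> real \<Rightarrow> real^'p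
    \<Rightarrow> real^'p^'p" where
  "Nmat X Y bL bU lam =
     (let G = Gmat X lam; Xt = Xtil X in
      transpose Xt ** G **
        (\<Sum>i\<in>UNIV. outer (axis i 1) (axis i 1) ** (Yhat X Y lam - Y) **
                     (mat 1 - Pact X Y bL bU lam i))
        ** transpose Y ** G ** Xt)"

definition gradf :: "real^'p^'n \<Rightarrow> real^('m::{finite,linorder})^'n \<Rightarrow> real \<Rightarrow> real \<Rightarrow> real^'p
    \<Rightarrow> real^'p" where
  "gradf X Y bL bU lam = diagv (Nmat X Y bL bU lam)"

definition hessf :: "real^'p^'n \<Rightarrow> real^('m::{finite,linorder})^'n \<Rightarrow> real \<Rightarrow> real \<Rightarrow> real^'p
    \<Rightarrow> real^'p^'p" where
  "hessf X Y bL bU lam =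
     (let G = Gmat X lam; Xt = Xtil X; N = Nmat X Y bL bU lam in
        hadamard (transpose Xt ** G ** Y ** transpose Y ** G ** Xt)
                 (transpose Xt ** G ** G ** Xt)
      - hadamard (transpose Xt ** G ** Xt) (N + transpose N)
      - (\<Sum>i\<in>UNIV. hadamard
           (transpose Xt ** G ** Y ** Pact X Y bL bU lam i ** transpose Y ** G ** Xt)
           (transpose Xt ** G ** outer (axis i 1) (axis i 1) ** G ** Xt)))"

end

theory Submission
  imports Defs
begin

text \<open>
  Row i of Qhat(l) is the Euclidean projection of row i of Yhat(l) onto a polyhedron, so row i of
  Yhat(l) - Qhat(l) lies in the span of the active columns of A, while for two parameters with the
  same active sets the rows of Qhat differ by a vector orthogonal to these columns. Hence on U
  we have Qhat(l) = Qhat(lam) + \<Psi>(Yhat(l) - Qhat(lam)), where \<Psi> replaces each row i by its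
  component orthogonal to the column space of A_{0,i}. So f is a smooth function of
  Yhat(l) = const - G(l) Y, and both formulas follow from the product rule,
  dG = - G (Xt D_h Xt^T) G, and the identity diag(A D_h B) = (A \<circ> B^T) h.
\<close>

section \<open>Matrix products and inverses\<close>

lemma bounded_bilinear_matrix_mult:
  "bounded_bilinear ((**) :: real^'n::finite^'m::finite \<Rightarrow> real^'p::finite^'n \<Rightarrow> real^'p^'m)"
  unfolding bilinear_conv_bounded_bilinear[symmetric] bilinear_def
  by (auto intro!: linearI simp: matrix_add_ldistrib matrix_scalar_ac scalar_matrix_assoc)
     (vector matrix_matrix_mult_def sum.distrib[symmetric] field_simps)

lemmas matrix_add_rdistrib = bounded_bilinear.add_left[OF bounded_bilinear_matrix_mult]
  and matrix_diff_ldistrib = bounded_bilinear.diff_right[OF bounded_bilinear_matrix_mult]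
  and matrix_diff_rdistrib = bounded_bilinear.diff_left[OF bounded_bilinear_matrix_mult]
  and matrix_minus_left = bounded_bilinear.minus_left[OF bounded_bilinear_matrix_mult]
  and matrix_minus_right = bounded_bilinear.minus_right[OF bounded_bilinear_matrix_mult]
  and matrix_sum_left = bounded_bilinear.sum_left[OF bounded_bilinear_matrix_mult]
  and matrix_sum_right = bounded_bilinear.sum_right[OF bounded_bilinear_matrix_mult]
  and has_derivative_matrix_mult = bounded_bilinear.FDERIV[OF bounded_bilinear_matrix_mult]

lemma transpose_add: "transpose (A + B) = transpose A + transpose (B :: 'a::semiring_1^'n^'m)"
  by (simp add: transpose_def vec_eq_iff)

lemma transpose_diff: "transpose (A - B) = transpose A - transpose (B :: 'a::ring_1^'n^'m)"
  by (simp add: transpose_def vec_eq_iff)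

lemma
  fixes A :: "'a::semiring_1^'n^'m"
  assumes "invertible A"
  shows matrix_inv_right: "A ** matrix_inv A = mat 1"
    and matrix_inv_left: "matrix_inv A ** A = mat 1"
  using someI_ex[OF assms[unfolded invertible_def]] unfolding matrix_inv_def by auto

lemma matrix_inv_symmetric:
  fixes A :: "real^'n::finite^'n"
  assumes "invertible A" "transpose A = A"
  shows "transpose (matrix_inv A) = matrix_inv A"
proof -
  let ?G = "matrix_inv A"
  have "transpose ?G ** A = mat 1"
    using matrix_inv_right[OF assms(1)] by (metis assms(2) matrix_transpose_mul transpose_mat)
  have "transpose ?G = transpose ?G ** (A ** ?G)"
    by (simp add: matrix_inv_right[OF assms(1)])
  also have "\<dots> = ?G"
    by (simp add: matrix_mul_assoc \<open>transpose ?G ** A = mat 1\<close>)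
  finally show ?thesis .
qed

lemma matrix_inv_remainder:
  fixes A B :: "real^'n::finite^'n"
  assumes "invertible A" "invertible B"
  shows "matrix_inv B - matrix_inv A + matrix_inv A ** (B - A) ** matrix_inv A
    = - ((matrix_inv B - matrix_inv A) ** (B - A) ** matrix_inv A)"
proof -
  have "matrix_inv B ** (B - A) ** matrix_inv A
      = (matrix_inv B ** B) ** matrix_inv A - matrix_inv B ** (A ** matrix_inv A)"
    by (simp add: matrix_diff_ldistrib matrix_diff_rdistrib matrix_mul_assoc)
  also have "\<dots> = matrix_inv A - matrix_inv B"
    by (simp add: matrix_inv_left[OF assms(2)] matrix_inv_right[OF assms(1)])
  finally show ?thesis
    by (simp add: matrix_diff_rdistrib)
qed

lemma continuous_on_det:
  fixes M :: "'x::topological_space \<Rightarrow> real^'n::finite^'n"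
  assumes "continuous_on S M"
  shows "continuous_on S (\<lambda>y. det (M y))"
  unfolding det_def by (intro continuous_intros assms)

lemma matrix_inv_cramer:
  fixes A :: "real^'n::finite^'n"
  assumes "invertible A"
  shows "matrix_inv A = (\<chi> k j. det (\<chi> a b. if b = k then axis j 1 $ a else A $ a $ b) / det A)"
proof -
  have "det A \<noteq> 0"
    using assms invertible_det_nz by blast
  have "matrix_inv A $ k $ j = det (\<chi> a b. if b = k then axis j 1 $ a else A $ a $ b) / det A"
    for k j
  proof -
    have "A *v (matrix_inv A *v axis j 1) = axis j 1"
      by (simp add: matrix_vector_mul_assoc matrix_inv_right[OF assms])
    then have "matrix_inv A *v axis j 1
        = (\<chi> k. det (\<chi> a b. if b = k then axis j 1 $ a else A $ a $ b) / det A)"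
      by (simp only: cramer[OF \<open>det A \<noteq> 0\<close>])
    moreover have "matrix_inv A $ k $ j = (matrix_inv A *v axis j 1) $ k"
      by (simp add: matrix_vector_mult_def axis_def if_distrib if_distribR cong: if_cong)
    ultimately show ?thesis by simp
  qed
  then show ?thesis by (simp add: vec_eq_iff)
qed

lemma continuous_on_matrix_inv:
  "continuous_on {A :: real^'n::finite^'n. invertible A} matrix_inv"
proof -
  have entry: "continuous_on S (\<lambda>A :: real^'n^'n. if b = k then c else A $ a $ b)" for S k c a b
    by (cases "b = k") (auto intro!: continuous_intros)
  have "continuous_on {A. invertible A} (\<lambda>A :: real^'n^'n.
      \<chi> k j. det (\<chi> a b. if b = k then axis j 1 $ a else A $ a $ b) / det A)"
    by (intro continuous_on_vec_lambda continuous_on_divide continuous_on_det continuous_on_id entry)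
       (auto simp: invertible_det_nz)
  then show ?thesis
    by (rule continuous_on_cong[THEN iffD1, rotated -1]) (auto simp: matrix_inv_cramer)
qed

lemma open_invertible: "open {A :: real^'n::finite^'n. invertible A}"
  using open_Collect_neq[OF continuous_on_det[OF continuous_on_id] continuous_on_const, of 0]
  by (simp add: invertible_det_nz)

lemma has_derivative_matrix_inv:
  fixes A :: "real^'n::finite^'n"
  assumes "invertible A"
  shows "(matrix_inv has_derivative (\<lambda>H. - (matrix_inv A ** H ** matrix_inv A))) (at A)"
proof -
  obtain e where e: "e > 0" "ball A e \<subseteq> {B. invertible B}"
    using open_invertible assms by (auto simp: open_contains_ball)
  obtain K where K: "K > 0" "\<And>a b. norm ((a :: real^'n^'n) ** (b :: real^'n^'n)) \<le> norm a * norm b * K"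
    using bounded_bilinear.pos_bounded[OF bounded_bilinear_matrix_mult] by blast
  have "isCont matrix_inv A"
    using continuous_on_matrix_inv open_invertible assms continuous_on_eq_continuous_at by blast
  then have "((\<lambda>B. norm (matrix_inv B - matrix_inv A) * K * norm (matrix_inv A) * K) \<longlongrightarrow> 0) (at A)"
    by (intro tendsto_mult_left_zero tendsto_norm_zero) (simp add: isCont_def LIM_zero)
  moreover have "bounded_linear (\<lambda>H. - (matrix_inv A ** H ** matrix_inv A))"
    by (intro bounded_linear_minus bounded_linear_compose[OF bounded_bilinear.bounded_linear_left
        bounded_bilinear.bounded_linear_right] bounded_bilinear_matrix_mult)
  moreover have "norm (matrix_inv B - matrix_inv A - - (matrix_inv A ** (B - A) ** matrix_inv A)) / norm (B - A)
      \<le> norm (matrix_inv B - matrix_inv A) * K * norm (matrix_inv A) * K"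
    if "dist B A < e" for B
  proof -
    let ?D = "matrix_inv B - matrix_inv A"
    have "invertible B"
      using e that by (auto simp: dist_commute)
    then have "norm (?D - - (matrix_inv A ** (B - A) ** matrix_inv A))
        = norm (?D ** (B - A) ** matrix_inv A)"
      using matrix_inv_remainder[OF assms] by (simp del: minus_diff_eq)
    also have "\<dots> \<le> norm (?D ** (B - A)) * norm (matrix_inv A) * K"
      by (rule K(2))
    also have "\<dots> \<le> (norm ?D * norm (B - A) * K) * norm (matrix_inv A) * K"
      using K by (intro mult_right_mono K(2)) auto
    finally show ?thesis
      by (simp add: divide_le_eq mult_ac)
  qed
  ultimately show ?thesis
    by (intro has_derivativeI_sandwich[OF e(1)]) auto
qed

section \<open>Orthogonal projections\<close>

lemma ex1_orth_proj: "\<exists>!y. y \<in> span S \<and> (\<forall>z\<in>span S. inner (x - y) z = 0)"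
  for S :: "'a::euclidean_space set"
proof -
  obtain y z where y: "y \<in> span S" "\<And>w. w \<in> span S \<Longrightarrow> orthogonal z w" "x = y + z"
    using orthogonal_subspace_decomp_exists by blast
  show ?thesis
  proof (rule ex1I[of _ y])
    show "y \<in> span S \<and> (\<forall>z\<in>span S. inner (x - y) z = 0)"
      using y by (auto simp: orthogonal_def)
    fix w assume w: "w \<in> span S \<and> (\<forall>z\<in>span S. inner (x - w) z = 0)"
    have "y - w \<in> span S"
      using y w span_diff by blast
    then have "inner (y - w) (y - w) = inner (x - w) (y - w) - inner (x - y) (y - w)"
      by (simp add: inner_diff_left)
    also have "\<dots> = 0"
      using \<open>y - w \<in> span S\<close> w y by (simp add: orthogonal_def)
    finally show "w = y" by simp
  qed
qed

lemma
  fixes S :: "'a::euclidean_space set"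
  shows orth_proj_in_span: "orth_proj S x \<in> span S"
    and orth_proj_orthogonal: "z \<in> span S \<Longrightarrow> inner (x - orth_proj S x) z = 0"
  using theI'[OF ex1_orth_proj[of S x]] unfolding orth_proj_def by auto

lemma orth_proj_eqI:
  fixes S :: "'a::euclidean_space set"
  assumes "y \<in> span S" "\<And>z. z \<in> span S \<Longrightarrow> inner (x - y) z = 0"
  shows "orth_proj S x = y"
  using ex1_orth_proj[of S x] orth_proj_in_span orth_proj_orthogonal assms by blast

lemma linear_orth_proj: "linear (orth_proj (S :: 'a::euclidean_space set))"
proof (rule linearI)
  fix a b :: 'a and c :: real
  have a: "inner a z = inner (orth_proj S a) z" and b: "inner b z = inner (orth_proj S b) z"
    if "z \<in> span S" for z
    using orth_proj_orthogonal[OF that] by (simp_all add: inner_diff_left)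
  show "orth_proj S (a + b) = orth_proj S a + orth_proj S b"
    by (rule orth_proj_eqI) (simp_all add: span_add orth_proj_in_span inner_diff_left inner_add_left a b)
  show "orth_proj S (c *\<^sub>R a) = c *\<^sub>R orth_proj S a"
    by (rule orth_proj_eqI) (simp_all add: span_mul orth_proj_in_span inner_diff_left a)
qed

lemma orth_proj_id: "x \<in> span S \<Longrightarrow> orth_proj S x = x"
  for S :: "'a::euclidean_space set"
  by (rule orth_proj_eqI) auto

lemma orth_proj_eq_0:
  fixes S :: "'a::euclidean_space set"
  assumes "\<And>z. z \<in> S \<Longrightarrow> inner x z = 0"
  shows "orth_proj S x = 0"
proof (rule orth_proj_eqI)
  show "inner (x - 0) z = 0" if "z \<in> span S" for z
    using assms orthogonal_to_span[OF that] by (simp add: orthogonal_def)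
qed (simp add: span_zero)

lemma orth_proj_self_adjoint: "inner (orth_proj S u) v = inner u (orth_proj S v)"
  for S :: "'a::euclidean_space set"
proof -
  have "inner (v - orth_proj S v) (orth_proj S u) = 0"
    by (rule orth_proj_orthogonal[OF orth_proj_in_span])
  then have "inner (orth_proj S u) v = inner (orth_proj S u) (orth_proj S v)"
    by (simp add: inner_diff_left inner_diff_right inner_commute)
  also have "inner (u - orth_proj S u) (orth_proj S v) = 0"
    by (rule orth_proj_orthogonal[OF orth_proj_in_span])
  then have "inner (orth_proj S u) (orth_proj S v) = inner u (orth_proj S v)"
    by (simp add: inner_diff_left)
  finally show ?thesis .
qed

lemma in_span_if_orthogonal_to_orthogonals:
  fixes S :: "'a::euclidean_space set"
  assumes "\<And>d. (\<And>z. z \<in> S \<Longrightarrow> inner d z = 0) \<Longrightarrow> inner x d = 0"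
  shows "x \<in> span S"
proof -
  let ?d = "x - orth_proj S x"
  have "inner x ?d = 0"
    using assms orth_proj_orthogonal span_base by blast
  moreover have "inner (orth_proj S x) ?d = 0"
    using orth_proj_orthogonal[OF orth_proj_in_span] by (simp add: inner_commute)
  ultimately have "inner ?d ?d = 0"
    by (simp add: inner_diff_left)
  then show ?thesis
    using orth_proj_in_span[of S x] by simp
qed

lemma transpose_matrix_orth_proj:
  "transpose (matrix (orth_proj (S :: (real^'m::finite) set))) = matrix (orth_proj S)"
proof -
  have "orth_proj S (axis j 1) $ i = orth_proj S (axis i 1) $ j" for i j :: 'm
    using orth_proj_self_adjoint[where S = S and u = "axis j 1" and v = "axis i 1"]
    by (simp add: inner_axis inner_axis' inner_commute)
  then show ?thesis
    by (simp add: vec_eq_iff transpose_def matrix_def)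
qed

lemma vector_matrix_orth_proj: "x v* matrix (orth_proj (S :: (real^'m::finite) set)) = orth_proj S x"
proof -
  have "x v* matrix (orth_proj S) = transpose (matrix (orth_proj S)) *v x"
    by simp
  then show ?thesis
    by (simp only: transpose_matrix_orth_proj fun_cong[OF matrix_vector_mul(2)[OF linear_orth_proj]])
qed

lemma eq_plus_orth_compl_projI:
  fixes S :: "'a::euclidean_space set"
  assumes "y - q \<in> span S" "\<And>s. s \<in> S \<Longrightarrow> inner (q - q0) s = 0"
  shows "q = q0 + ((y - q0) - orth_proj S (y - q0))"
proof -
  have "orth_proj S ((y - q0) - (y - q)) = orth_proj S (y - q0) - orth_proj S (y - q)"
    by (rule linear_diff[OF linear_orth_proj])
  moreover have "orth_proj S ((y - q0) - (y - q)) = 0"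
    using orth_proj_eq_0[of S "q - q0"] assms(2) by (simp add: algebra_simps)
  ultimately show ?thesis
    using orth_proj_id[OF assms(1)] by (simp add: algebra_simps)
qed

definition rowwise_orth_compl :: "('n::finite \<Rightarrow> 'a::euclidean_space set) \<Rightarrow> 'a^'n \<Rightarrow> 'a^'n" where
  "rowwise_orth_compl S Z = (\<chi> i. Z $ i - orth_proj (S i) (Z $ i))"

lemma linear_rowwise_orth_compl: "linear (rowwise_orth_compl S)"
  by (rule linearI)
     (simp_all add: rowwise_orth_compl_def vec_eq_iff linear_add[OF linear_orth_proj]
       linear_scale[OF linear_orth_proj] algebra_simps)

lemma bounded_linear_rowwise_orth_compl: "bounded_linear (rowwise_orth_compl S)"
  using linear_rowwise_orth_compl linear_conv_bounded_linear by blast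

lemma rowwise_orth_compl_self_adjoint:
  "inner Z (rowwise_orth_compl S V) = inner (rowwise_orth_compl S Z) V"
  unfolding inner_vec_def[of Z] inner_vec_def[of "rowwise_orth_compl S Z"]
  by (simp add: rowwise_orth_compl_def inner_diff_left inner_diff_right orth_proj_self_adjoint)

lemma rowwise_orth_compl_eq_0: "(\<And>i. Z $ i \<in> span (S i)) \<Longrightarrow> rowwise_orth_compl S Z = 0"
  by (simp add: rowwise_orth_compl_def vec_eq_iff orth_proj_id)

lemma outer_nth [simp]: "outer u v $ a $ b = u $ a * v $ b"
  by (simp add: outer_def)

lemma outer_mult: "outer u v ** (B :: real^'c::finite^'b::finite) = outer (u :: real^'a::finite) (v v* B)"
  by (simp add: vec_eq_iff outer_def matrix_matrix_mult_def vector_matrix_mult_def sum_distrib_left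
      mult.assoc)

lemma axis_vector_matrix: "axis i 1 v* (A :: real^'b::finite^'a::finite) = A $ i"
  by (simp add: vec_eq_iff vector_matrix_mult_def axis_def if_distrib if_distribR cong: if_cong)

lemma sum_outer_axis_mult:
  fixes Z :: "real^'m::finite^'n::finite" and M :: "'n \<Rightarrow> real^'k::finite^'m"
  shows "(\<Sum>i\<in>UNIV. outer (axis i 1) (axis i 1) ** Z ** M i) = (\<chi> i. Z $ i v* M i)"
proof -
  have "outer (axis i 1) (axis i 1) ** Z ** M i = outer (axis i 1) (Z $ i v* M i)" for i
    by (simp add: outer_mult axis_vector_matrix vector_matrix_mul_assoc)
  then have "(\<Sum>i\<in>UNIV. outer (axis i 1) (axis i 1) ** Z ** M i)
      = (\<Sum>i\<in>UNIV. outer (axis i 1) (Z $ i v* M i))"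
    by simp
  also have "\<dots> = (\<chi> i. Z $ i v* M i)"
    by (simp add: vec_eq_iff sum_component axis_def if_distrib if_distribR cong: if_cong)
  finally show ?thesis .
qed

lemma rowwise_orth_compl_eq_sum:
  "rowwise_orth_compl S Z
     = (\<Sum>i\<in>UNIV. outer (axis i 1) (axis i 1) ** Z ** (mat 1 - matrix (orth_proj (S i))))"
  by (simp add: sum_outer_axis_mult rowwise_orth_compl_def vector_matrix_mult_diff_rdistrib
      vector_matrix_orth_proj)

section \<open>Projection onto a polyhedron\<close>

lemma normal_in_span_active_constraints:
  fixes a :: "'c::finite \<Rightarrow> 'v::euclidean_space"
  assumes feasible: "\<forall>c. b c \<le> inner x (a c)"
    and normal: "\<And>z. \<forall>c. b c \<le> inner z (a c) \<Longrightarrow> inner v (z - x) \<le> 0"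
  shows "v \<in> span (a ` {c. inner x (a c) = b c})"
proof (rule in_span_if_orthogonal_to_orthogonals)
  \<comment> \<open>Moving from x along d keeps the active constraints, and the inactive ones for small t > 0.\<close>
  have descent: "inner v d \<le> 0" if d: "\<And>c. inner x (a c) = b c \<Longrightarrow> inner d (a c) = 0" for d
  proof -
    have "\<forall>\<^sub>F t in at_right 0. b c \<le> inner (x + t *\<^sub>R d) (a c)" for c
    proof (cases "inner x (a c) = b c")
      case True
      then show ?thesis using d by (simp add: inner_add_left)
    next
      case False
      then have "b c < inner x (a c)"
        using feasible order_le_neq_trans by metis
      moreover have "((\<lambda>t. inner (x + t *\<^sub>R d) (a c)) \<longlongrightarrow> inner x (a c)) (at_right 0)"
        by (auto intro!: tendsto_eq_intros)
      ultimately show ?thesis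
        using order_tendstoD(1) by (fastforce elim: eventually_mono)
    qed
    then have "\<forall>\<^sub>F t in at_right 0. 0 < t \<and> (\<forall>c. b c \<le> inner (x + t *\<^sub>R d) (a c))"
      by (intro eventually_conj eventually_all_finite eventually_at_right_less)
    then obtain t :: real where "0 < t" "\<forall>c. b c \<le> inner (x + t *\<^sub>R d) (a c)"
      using eventually_happens'[OF trivial_limit_at_right_real] by blast
    then have "t * inner v d \<le> 0"
      using normal by fastforce
    with \<open>0 < t\<close> show ?thesis
      by (simp add: mult_le_0_iff)
  qed
  fix d assume "\<And>z. z \<in> a ` {c. inner x (a c) = b c} \<Longrightarrow> inner d z = 0"
  then have "inner v d \<le> 0" and "inner v (- d) \<le> 0"
    by (intro descent; force)+
  then show "inner v d = 0" by simp
qed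

section \<open>The projection onto the feasible set\<close>

lemma Min_UNIV_iff: "(\<forall>l. k \<le> l) \<longleftrightarrow> k = Min (UNIV :: 'm::{finite,linorder} set)"
  by (auto intro: antisym)

lemma is_succ_iff_Min:
  assumes "j < (l :: 'm::{finite,linorder})"
  shows "is_succ j k \<longleftrightarrow> k = Min {l. j < l}"
proof -
  have "Min {l. j < l} \<in> {l. j < l}"
    using assms by (intro Min_in) auto
  then show ?thesis
    unfolding is_succ_def by (auto intro: antisym)
qed

lemma column_sum_Amat:
  "(\<Sum>k\<in>UNIV. (Amat :: real^('m option)^('m::{finite,linorder})) $ k $ c)
     = (case c of None \<Rightarrow> 1 | Some j \<Rightarrow> if \<forall>l. l \<le> j then -1 else 0)"
proof (cases c)
  case None
  then show ?thesis by (simp add: Amat_def Min_UNIV_iff)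
next
  case (Some j)
  show ?thesis
  proof (cases "\<forall>l. l \<le> j")
    case True
    then have "\<not> is_succ j k" for k
      by (auto simp: is_succ_def not_less)
    then have "(Amat $ k $ c :: real) = (if k = j then -1 else 0)" for k
      by (simp add: Amat_def Some)
    then show ?thesis
      using Some True by simp
  next
    case False
    then obtain l where "j < l" by (auto simp: not_le)
    let ?s = "Min {l. j < l}"
    have "?s \<noteq> j"
      using is_succ_iff_Min[OF \<open>j < l\<close>, of ?s] by (auto simp: is_succ_def)
    then have "(\<Sum>k\<in>UNIV. (Amat $ k $ c :: real))
        = (\<Sum>k\<in>UNIV. (if k = j then -1 else 0) + (if k = ?s then 1 else 0))"
      by (intro sum.cong) (auto simp: Amat_def Some is_succ_iff_Min[OF \<open>j < l\<close>])
    then show ?thesis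
      using Some False by (simp add: sum.distrib)
  qed
qed

lemma feasible_iff_rows:
  "feasible bL bU Q \<longleftrightarrow> (\<forall>i c. Bmat bL bU $ i $ c \<le> inner (Q $ i) (column c Amat))"
  by (simp add: feasible_def matrix_matrix_mult_def inner_vec_def column_def)

lemma active_iff:
  "c \<in> active X Y bL bU l i \<longleftrightarrow> inner (Qhat X Y bL bU l $ i) (column c Amat) = Bmat bL bU $ i $ c"
  by (auto simp: active_def matrix_matrix_mult_def inner_vec_def column_def)

lemma feasible_const:
  assumes "bL \<le> bU"
  shows "feasible bL bU ((\<chi> i k. bL) :: real^('m::{finite,linorder})^('n::finite))"
proof -
  have "(((\<chi> i k. bL) :: real^('m::{finite,linorder})^('n::finite)) ** Amat) $ i $ c
      = bL * (\<Sum>k\<in>UNIV. (Amat $ k $ c :: real))" for i c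
    by (simp add: matrix_matrix_mult_def sum_distrib_left)
  then show ?thesis
    using assms by (auto simp: feasible_def column_sum_Amat Bmat_def split: option.split)
qed

lemma closed_feasible: "closed {Q :: real^('m::{finite,linorder})^('n::finite). feasible bL bU Q}"
  unfolding feasible_iff_rows
  by (intro closed_Collect_all closed_Collect_le continuous_intros)

lemma convex_feasible: "convex {Q :: real^('m::{finite,linorder})^('n::finite). feasible bL bU Q}"
proof (rule convexI)
  fix P Q :: "real^('m::{finite,linorder})^('n::finite)" and u v :: real
  assume "P \<in> {Q. feasible bL bU Q}" "Q \<in> {Q. feasible bL bU Q}" "0 \<le> u" "0 \<le> v" "u + v = 1"
  then have "u * Bmat bL bU $ i $ c + v * Bmat bL bU $ i $ c
      \<le> u * inner (P $ i) (column c Amat) + v * inner (Q $ i) (column c Amat)" for i c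
    by (intro add_mono mult_left_mono) (auto simp: feasible_iff_rows)
  with \<open>u + v = 1\<close> show "u *\<^sub>R P + v *\<^sub>R Q \<in> {Q. feasible bL bU Q}"
    by (simp add: feasible_iff_rows inner_add_left distrib_right[symmetric])
qed

definition active_columns :: "real^'p^'n \<Rightarrow> real^('m::{finite,linorder})^'n \<Rightarrow> real \<Rightarrow> real
    \<Rightarrow> real^'p \<Rightarrow> 'n \<Rightarrow> (real^('m::{finite,linorder})) set" where
  "active_columns X Y bL bU l i = (\<lambda>c. column c Amat) ` active X Y bL bU l i"

context
  fixes bL bU :: real
  assumes bLU: "bL \<le> bU"
begin

lemma Qhat_eq_closest_point:
  "Qhat X Y bL bU l = closest_point {Q. feasible bL bU Q} (Yhat X Y l)"
proof -
  let ?F = "{Q. feasible bL bU Q}" and ?y = "Yhat X Y l"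
  have "?F \<noteq> {}"
    using feasible_const[OF bLU] by blast
  have arg_min_iff: "is_arg_min (\<lambda>Q. (1/2) * (norm (Q - ?y))\<^sup>2) (feasible bL bU) Q
      \<longleftrightarrow> Q \<in> ?F \<and> (\<forall>z\<in>?F. dist ?y Q \<le> dist ?y z)" for Q
    by (simp add: is_arg_min_linorder dist_norm norm_minus_commute)
  show ?thesis
    unfolding Qhat_def arg_min_iff
    using closest_point_exists[OF closed_feasible \<open>?F \<noteq> {}\<close>]
      closest_point_unique[OF convex_feasible closed_feasible]
    by (intro the_equality) auto
qed

lemma Qhat_feasible: "feasible bL bU (Qhat X Y bL bU l)"
  using closest_point_in_set[OF closed_feasible] feasible_const[OF bLU]
  unfolding Qhat_eq_closest_point by blast

lemma Qhat_variational_inequality: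
  "feasible bL bU Z \<Longrightarrow> inner (Yhat X Y l - Qhat X Y bL bU l) (Z - Qhat X Y bL bU l) \<le> 0"
  unfolding Qhat_eq_closest_point using closest_point_dot[OF convex_feasible closed_feasible] by blast

lemma Yhat_minus_Qhat_in_span:
  fixes Y :: "real^('m::{finite,linorder})^'n::finite"
  shows "(Yhat X Y l - Qhat X Y bL bU l) $ i \<in> span (active_columns X Y bL bU l i)"
proof -
  let ?Q = "Qhat X Y bL bU l" and ?R = "Yhat X Y l - Qhat X Y bL bU l"
  have "?R $ i \<in> span ((\<lambda>c. column c Amat) ` {c. inner (?Q $ i) (column c Amat) = Bmat bL bU $ i $ c})"
  proof (rule normal_in_span_active_constraints)
    show "\<forall>c. Bmat bL bU $ i $ c \<le> inner (?Q $ i) (column c Amat)"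
      using Qhat_feasible feasible_iff_rows by blast
    fix z :: "real^('m::{finite,linorder})" assume z: "\<forall>c. Bmat bL bU $ i $ c \<le> inner z (column c Amat)"
    define Z where "Z = (\<chi> j. if j = i then z else ?Q $ j)"
    have "feasible bL bU Z"
      using z Qhat_feasible[where X = X and Y = Y and l = l]
      by (simp add: feasible_iff_rows Z_def)
    moreover have "inner ?R (Z - ?Q) = inner (?R $ i) (z - ?Q $ i)"
      by (simp add: inner_vec_def Z_def if_distrib if_distribR cong: if_cong)
    ultimately show "inner (?R $ i) (z - ?Q $ i) \<le> 0"
      using Qhat_variational_inequality by metis
  qed
  moreover have "active X Y bL bU l i = {c. inner (?Q $ i) (column c Amat) = Bmat bL bU $ i $ c}"
    by (auto simp: active_iff)
  ultimately show ?thesis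
    by (simp add: active_columns_def)
qed

lemma Qhat_eq_if_same_active:
  assumes same: "\<And>i. active X Y bL bU l i = active X Y bL bU l0 i"
  shows "Qhat X Y bL bU l = Qhat X Y bL bU l0
           + rowwise_orth_compl (active_columns X Y bL bU l0) (Yhat X Y l - Qhat X Y bL bU l0)"
proof -
  have "Qhat X Y bL bU l $ i = Qhat X Y bL bU l0 $ i
      + ((Yhat X Y l $ i - Qhat X Y bL bU l0 $ i)
         - orth_proj (active_columns X Y bL bU l0 i) (Yhat X Y l $ i - Qhat X Y bL bU l0 $ i))" for i
  proof (rule eq_plus_orth_compl_projI)
    show "Yhat X Y l $ i - Qhat X Y bL bU l $ i \<in> span (active_columns X Y bL bU l0 i)"
      using Yhat_minus_Qhat_in_span[of X Y l i] by (simp add: active_columns_def same)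
    fix s assume "s \<in> active_columns X Y bL bU l0 i"
    then obtain c where s: "s = column c Amat"
      and "c \<in> active X Y bL bU l i" "c \<in> active X Y bL bU l0 i"
      by (auto simp: active_columns_def same)
    then have "inner (Qhat X Y bL bU l $ i) s = Bmat bL bU $ i $ c"
      and "inner (Qhat X Y bL bU l0 $ i) s = Bmat bL bU $ i $ c"
      by (simp_all only: s active_iff)
    then show "inner (Qhat X Y bL bU l $ i - Qhat X Y bL bU l0 $ i) s = 0"
      by (simp add: inner_diff_left)
  qed
  then show ?thesis
    by (simp add: vec_eq_iff rowwise_orth_compl_def)
qed

end

section \<open>Derivatives of the resolvent\<close>

lemma bounded_linear_Dlam: "bounded_linear (Dlam :: real^'p::finite \<Rightarrow> real^'p^'p)"
  by (intro linear_conv_bounded_linear[THEN iffD1] linearI) (auto simp: Dlam_def vec_eq_iff)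

lemma transpose_Dlam: "transpose (Dlam h) = Dlam h"
  by (simp add: Dlam_def transpose_def vec_eq_iff)

lemma transpose_Gmat:
  assumes "invertible (Xtil X ** Dlam l ** transpose (Xtil X) + mat 1)"
  shows "transpose (Gmat X l) = Gmat X l"
  unfolding Gmat_def using assms
  by (intro matrix_inv_symmetric) (simp_all add: transpose_add matrix_transpose_mul matrix_mul_assoc
      transpose_Dlam)

lemma has_derivative_Gmat:
  assumes "invertible (Xtil X ** Dlam l ** transpose (Xtil X) + mat 1)"
  shows "(Gmat X has_derivative
          (\<lambda>h. - (Gmat X l ** (Xtil X ** Dlam h ** transpose (Xtil X)) ** Gmat X l))) (at l)"
proof -
  have "((\<lambda>l. Xtil X ** Dlam l ** transpose (Xtil X) + mat 1) has_derivative
      (\<lambda>h. Xtil X ** Dlam h ** transpose (Xtil X))) (at l)"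
    by (intro has_derivative_add_const bounded_linear.has_derivative[OF bounded_linear_compose[OF
        bounded_bilinear.bounded_linear_left bounded_linear_compose[OF
        bounded_bilinear.bounded_linear_right bounded_linear_Dlam]]] has_derivative_ident
        bounded_bilinear_matrix_mult)
  from has_derivative_compose[OF this has_derivative_matrix_inv[OF assms]] show ?thesis
    by (simp add: Gmat_def[abs_def])
qed

lemma has_derivative_Yhat:
  fixes X :: "real^'p::finite^'n::finite"
  assumes "invertible (Xtil X ** Dlam l ** transpose (Xtil X) + mat 1)"
  shows "(Yhat X Y has_derivative
          (\<lambda>h. Gmat X l ** (Xtil X ** Dlam h ** transpose (Xtil X)) ** Gmat X l ** Y)) (at l)"
proof -
  have "((\<lambda>l. (1 / real CARD('n)) *\<^sub>R (ones_mat ** Y) + Y - Gmat X l ** Y) has_derivative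
      (\<lambda>h. 0 + 0 - (Gmat X l ** 0
        + - (Gmat X l ** (Xtil X ** Dlam h ** transpose (Xtil X)) ** Gmat X l) ** Y))) (at l)"
    by (intro has_derivative_diff has_derivative_add has_derivative_const has_derivative_matrix_mult
        has_derivative_Gmat[OF assms])
  then show ?thesis
    by (simp add: Yhat_def[abs_def] matrix_minus_left)
qed

section \<open>Diagonals and Hadamard products\<close>

lemma linear_diagv: "linear (diagv :: real^'a::finite^'a \<Rightarrow> real^'a)"
  by (rule linearI) (simp_all add: diagv_def vec_eq_iff)

lemma diagv_mult_Dlam_mult:
  "diagv (A ** Dlam h ** B) = hadamard A (transpose B) *v (h :: real^'p::finite)"
  by (simp add: vec_eq_iff diagv_def hadamard_def transpose_def matrix_matrix_mult_def
      matrix_vector_mult_def Dlam_def if_distrib if_distribR sum.distrib mult_ac cong: if_cong)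

lemma inner_diagv: "inner (diagv N) h = trace (Dlam h ** N)"
  unfolding trace_def matrix_matrix_mult_def inner_vec_def diagv_def Dlam_def
  by (simp add: if_distrib if_distribR mult.commute cong: if_cong)

lemma inner_eq_trace: "inner (A :: real^'b::finite^'a::finite) B = trace (A ** transpose B)"
  unfolding trace_def matrix_matrix_mult_def inner_vec_def transpose_def by simp

lemma inner_diagv_congruence:
  fixes Xt :: "real^'p::finite^'n::finite" and G :: "real^'n^'n" and R Y :: "real^'m::finite^'n"
  assumes "transpose G = G"
  shows "inner (diagv (transpose Xt ** G ** R ** transpose Y ** G ** Xt)) h
       = inner R (G ** (Xt ** Dlam h ** transpose Xt) ** G ** Y)"
proof -
  have "inner (diagv (transpose Xt ** G ** R ** transpose Y ** G ** Xt)) h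
      = trace ((Dlam h ** transpose Xt ** G) ** (R ** transpose Y ** G ** Xt))"
    by (simp add: inner_diagv matrix_mul_assoc)
  also have "\<dots> = trace ((R ** transpose Y ** G ** Xt) ** (Dlam h ** transpose Xt ** G))"
    by (rule trace_mul_sym)
  also have "\<dots> = inner R (G ** (Xt ** Dlam h ** transpose Xt) ** G ** Y)"
    by (simp add: inner_eq_trace matrix_transpose_mul assms transpose_Dlam matrix_mul_assoc)
  finally show ?thesis .
qed

lemma hadamard_commute: "hadamard A B = hadamard B A"
  by (simp add: hadamard_def mult.commute)

lemma
  shows hadamard_diff_right: "hadamard A (B - C) = hadamard A B - hadamard A C"
    and hadamard_add_right: "hadamard A (B + C) = hadamard A B + hadamard A C"
    and hadamard_sum_left: "hadamard (\<Sum>i\<in>I. F i) C = (\<Sum>i\<in>I. hadamard (F i) C)"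
  by (simp_all add: hadamard_def vec_eq_iff algebra_simps sum_component sum_distrib_left)

lemma sum_outer_axis: "(\<Sum>i\<in>UNIV. outer (axis i 1) (axis i 1)) = (mat 1 :: real^'n::finite^'n)"
  using sum_outer_axis_mult[of "mat 1" "\<lambda>_. mat 1"] by (simp add: vec_eq_iff)

lemma sum_matrix_vector_mult: "(\<Sum>i\<in>I. M i) *v x = (\<Sum>i\<in>I. M i *v (x :: real^'n::finite))"
  by (induction I rule: infinite_finite_induct) (auto simp: matrix_vector_mult_add_rdistrib)

section \<open>Differentiability under constant active sets\<close>

locale constant_active_set =
  fixes X :: "real^'p::finite^'n::finite" and Y :: "real^('m::{finite,linorder})^'n"
    and bL bU :: real and U :: "(real^'p) set" and lam :: "real^'p"
  assumes bLU: "bL \<le> bU" and open_U: "open U" and lam_in_U: "lam \<in> U"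
    and invertible: "\<And>l. l \<in> U \<Longrightarrow> invertible (Xtil X ** Dlam l ** transpose (Xtil X) + mat 1)"
    and active_const: "\<And>l i. l \<in> U \<Longrightarrow> active X Y bL bU l i = active X Y bL bU lam i"
begin

abbreviation "Xt \<equiv> Xtil X"
abbreviation "Psi \<equiv> rowwise_orth_compl (active_columns X Y bL bU lam)"

lemma Psi_Qhat_minus_Y:
  assumes "l \<in> U"
  shows "Psi (Qhat X Y bL bU l - Y) = Psi (Yhat X Y l - Y)"
proof -
  have "Psi (Yhat X Y l - Qhat X Y bL bU l) = 0"
  proof (rule rowwise_orth_compl_eq_0)
    fix i
    have "(Yhat X Y l - Qhat X Y bL bU l) $ i \<in> span (active_columns X Y bL bU l i)"
      by (rule Yhat_minus_Qhat_in_span[OF bLU])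
    then show "(Yhat X Y l - Qhat X Y bL bU l) $ i \<in> span (active_columns X Y bL bU lam i)"
      by (simp add: active_columns_def active_const[OF assms])
  qed
  moreover have "Psi ((Yhat X Y l - Y) - (Yhat X Y l - Qhat X Y bL bU l))
      = Psi (Yhat X Y l - Y) - Psi (Yhat X Y l - Qhat X Y bL bU l)"
    by (rule linear_diff[OF linear_rowwise_orth_compl])
  ultimately show ?thesis
    by simp
qed

lemma Nmat_eq: "l \<in> U \<Longrightarrow> Nmat X Y bL bU l
    = transpose Xt ** Gmat X l ** Psi (Yhat X Y l - Y) ** transpose Y ** Gmat X l ** Xt"
  by (simp add: Nmat_def Let_def Pact_def rowwise_orth_compl_eq_sum active_columns_def active_const)

lemma inner_gradf:
  assumes "l \<in> U"
  shows "inner (gradf X Y bL bU l) h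
    = inner (Psi (Qhat X Y bL bU l - Y)) (Gmat X l ** (Xt ** Dlam h ** transpose Xt) ** Gmat X l ** Y)"
  unfolding gradf_def Nmat_eq[OF assms] Psi_Qhat_minus_Y[OF assms]
  by (rule inner_diagv_congruence[OF transpose_Gmat[OF invertible[OF assms]]])

lemma has_derivative_fobj:
  assumes "l \<in> U"
  shows "(fobj X Y bL bU has_derivative (\<lambda>h. inner (gradf X Y bL bU l) h)) (at l)"
proof -
  let ?Q0 = "Qhat X Y bL bU lam"
  define F where "F l = ?Q0 + Psi (Yhat X Y l - ?Q0) - Y" for l
  define W where "W h = Gmat X l ** (Xt ** Dlam h ** transpose Xt) ** Gmat X l ** Y" for h
  have F_eq: "F y = Qhat X Y bL bU y - Y" if "y \<in> U" for y
    using Qhat_eq_if_same_active[OF bLU active_const[OF that]] by (simp add: F_def)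
  have "(F has_derivative (\<lambda>h. 0 + Psi (W h - 0) - 0)) (at l)"
    unfolding F_def W_def
    by (intro has_derivative_diff has_derivative_add has_derivative_const
        bounded_linear.has_derivative[OF bounded_linear_rowwise_orth_compl]
        has_derivative_Yhat invertible assms)
  then have "((\<lambda>l. (1/2) * inner (F l) (F l)) has_derivative
      (\<lambda>h. (1/2) * (inner (F l) (Psi (W h)) + inner (Psi (W h)) (F l)))) (at l)"
    by (intro has_derivative_mult_right has_derivative_inner) simp_all
  moreover have "fobj X Y bL bU y = (1/2) * inner (F y) (F y)" if "y \<in> U" for y
    by (simp add: fobj_def F_eq[OF that] power2_norm_eq_inner)
  moreover have "(1/2) * (inner (F l) (Psi (W h)) + inner (Psi (W h)) (F l))
      = inner (gradf X Y bL bU l) h" for h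
  proof -
    have "(1/2) * (inner (F l) (Psi (W h)) + inner (Psi (W h)) (F l)) = inner (Psi (F l)) (W h)"
      by (simp add: inner_commute[of "Psi (W h)"] rowwise_orth_compl_self_adjoint)
    then show ?thesis
      by (simp add: inner_gradf[OF assms] F_eq[OF assms] W_def)
  qed
  ultimately show ?thesis
    by (auto intro: has_derivative_transform_within_open[OF _ open_U assms])
qed

abbreviation "G \<equiv> Gmat X lam"
abbreviation "P i \<equiv> matrix (orth_proj (active_columns X Y bL bU lam i))"

definition Nmat_deriv :: "real^'p \<Rightarrow> real^'p^'p" where
  "Nmat_deriv h = (let L = Xt ** Dlam h ** transpose Xt; R = Psi (Yhat X Y lam - Y) in
     transpose Xt ** G ** Psi (G ** L ** G ** Y) ** transpose Y ** G ** Xt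
     - transpose Xt ** (G ** L ** G) ** R ** transpose Y ** G ** Xt
     - transpose Xt ** G ** R ** transpose Y ** (G ** L ** G) ** Xt)"

lemma has_derivative_Nmat: "(Nmat X Y bL bU has_derivative Nmat_deriv) (at lam)"
proof -
  note dG = has_derivative_Gmat[OF invertible[OF lam_in_U]]
  have dR: "((\<lambda>l. Psi (Yhat X Y l - Y)) has_derivative
      (\<lambda>h. Psi (G ** (Xt ** Dlam h ** transpose Xt) ** G ** Y - 0))) (at lam)"
    by (intro bounded_linear.has_derivative[OF bounded_linear_rowwise_orth_compl]
        has_derivative_diff has_derivative_Yhat invertible lam_in_U has_derivative_const)
  note product_rule = has_derivative_matrix_mult[OF has_derivative_matrix_mult[OF
      has_derivative_matrix_mult[OF has_derivative_matrix_mult[OF has_derivative_matrix_mult[OF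
      has_derivative_const dG] dR] has_derivative_const] dG] has_derivative_const]
  have "((\<lambda>l. transpose Xt ** Gmat X l ** Psi (Yhat X Y l - Y) ** transpose Y ** Gmat X l ** Xt)
      has_derivative Nmat_deriv) (at lam)"
    by (rule has_derivative_eq_rhs[OF product_rule])
       (simp add: fun_eq_iff Nmat_deriv_def Let_def matrix_add_rdistrib matrix_add_ldistrib
         matrix_diff_rdistrib matrix_diff_ldistrib
         matrix_minus_left matrix_minus_right matrix_mul_assoc)
  then show ?thesis
    by (rule has_derivative_transform_within_open[OF _ open_U lam_in_U]) (simp add: Nmat_eq)
qed

lemma diagv_Nmat_deriv: "diagv (Nmat_deriv h) = hessf X Y bL bU lam *v h"
proof -
  define R where "R = Psi (Yhat X Y lam - Y)"
  define N where "N = transpose Xt ** G ** R ** transpose Y ** G ** Xt"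
  define H where "H = transpose Xt ** G ** Xt"
  define K where "K i = transpose Xt ** G ** outer (axis i 1) (axis i 1) ** G ** Xt" for i
  define A where "A = transpose Xt ** G ** Y ** transpose Y ** G ** Xt"
  define B where "B i = transpose Xt ** G ** Y ** P i ** transpose Y ** G ** Xt" for i
  have G_sym: "transpose G = G"
    by (rule transpose_Gmat[OF invertible[OF lam_in_U]])
  have sym: "transpose H = H" "transpose (A - B i) = A - B i" for i
    by (simp_all add: H_def A_def B_def transpose_diff matrix_transpose_mul matrix_mul_assoc G_sym
        transpose_matrix_orth_proj)
  have "transpose Xt ** G ** Psi (G ** (Xt ** Dlam h ** transpose Xt) ** G ** Y) ** transpose Y ** G ** Xt
      = (\<Sum>i\<in>UNIV. transpose Xt ** G ** outer (axis i 1) (axis i 1)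
          ** (G ** (Xt ** Dlam h ** transpose Xt) ** G ** Y) ** (mat 1 - P i) ** transpose Y ** G ** Xt)"
    by (simp add: rowwise_orth_compl_eq_sum matrix_sum_left matrix_sum_right matrix_mul_assoc)
  also have "\<dots> = (\<Sum>i\<in>UNIV. K i ** Dlam h ** (A - B i))"
    by (simp add: K_def A_def B_def matrix_diff_ldistrib matrix_diff_rdistrib matrix_mul_assoc)
  finally have "Nmat_deriv h
      = (\<Sum>i\<in>UNIV. K i ** Dlam h ** (A - B i)) - H ** Dlam h ** N - N ** Dlam h ** H"
    by (simp add: Nmat_deriv_def Let_def R_def N_def H_def matrix_mul_assoc)
  then have "diagv (Nmat_deriv h)
      = ((\<Sum>i\<in>UNIV. hadamard (K i) (A - B i)) - hadamard H (transpose N) - hadamard N H) *v h"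
    by (simp add: linear_diff[OF linear_diagv] linear_sum[OF linear_diagv] diagv_mult_Dlam_mult
        sum_matrix_vector_mult matrix_vector_mult_diff_rdistrib sym)
  also have "(\<Sum>i\<in>UNIV. hadamard (K i) (A - B i)) - hadamard H (transpose N) - hadamard N H
      = hessf X Y bL bU lam"
  proof -
    have "(\<Sum>i\<in>UNIV. K i) = transpose Xt ** G ** (\<Sum>i\<in>UNIV. outer (axis i 1) (axis i 1)) ** G ** Xt"
      by (simp add: K_def matrix_sum_left matrix_sum_right)
    then have sum_K: "(\<Sum>i\<in>UNIV. K i) = transpose Xt ** G ** G ** Xt"
      by (simp add: sum_outer_axis)
    have "hessf X Y bL bU lam
        = hadamard A (\<Sum>i\<in>UNIV. K i) - hadamard H (N + transpose N) - (\<Sum>i\<in>UNIV. hadamard (B i) (K i))"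
      unfolding sum_K
      by (simp add: hessf_def Let_def Nmat_eq[OF lam_in_U] Pact_def active_columns_def
          R_def N_def H_def K_def A_def B_def)
    then show ?thesis
      by (simp add: hadamard_diff_right hadamard_add_right sum_subtractf hadamard_commute[of _ "K _"]
          hadamard_commute[of N] hadamard_sum_left hadamard_commute[of A] hadamard_commute[of "B _"])
  qed
  finally show ?thesis .
qed

lemma has_derivative_gradf:
  "(gradf X Y bL bU has_derivative (\<lambda>h. hessf X Y bL bU lam *v h)) (at lam)"
proof -
  have "((\<lambda>l. diagv (Nmat X Y bL bU l)) has_derivative (\<lambda>h. diagv (Nmat_deriv h))) (at lam)"
    using linear_diagv linear_conv_bounded_linear
    by (blast intro: bounded_linear.has_derivative has_derivative_Nmat)
  then show ?thesis
    by (simp only: gradf_def[abs_def] diagv_Nmat_deriv)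
qed

end

theorem proposition2:
  fixes X :: "real^'p::finite^'n::finite"
    and Y :: "real^'m::{finite,linorder}^'n"
    and bL bU :: real
    and U :: "(real^'p) set"
    and lam :: "real^'p"
  assumes centered: "\<forall>k. (\<Sum>i\<in>UNIV. X $ i $ k) = 0"
    and bLU: "bL < bU"
    and U_open: "open U"
    and lam_in: "lam \<in> U"
    and invert: "\<forall>l\<in>U. invertible (Xtil X ** Dlam l ** transpose (Xtil X) + mat 1)"
    and act_const: "\<forall>l\<in>U. \<forall>i. active X Y bL bU l i = active X Y bL bU lam i"
  shows "(\<forall>l\<in>U. (fobj X Y bL bU has_derivative (\<lambda>h. inner (gradf X Y bL bU l) h)) (at l))
       \<and> (gradf X Y bL bU has_derivative (\<lambda>h. hessf X Y bL bU lam *v h)) (at lam)"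
proof -
  interpret constant_active_set X Y bL bU U lam
    using bLU U_open lam_in invert act_const by unfold_locales (blast | linarith)+
  show ?thesis
    by (simp add: has_derivative_fobj has_derivative_gradf)
qed

end
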